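(* Let $\mathbf A\in\mathbb C^{m\times n}$ with $m\ge n$, and let $\mathbf A=\mathbf Q\mathbf R$ be its (thin) QR decomposition, partitioned as $[\mathbf A_1\ \mathbf A_2]=[\mathbf Q_1\ \mathbf Q_2]\begin{bmatrix}\mathbf R_{11}&\mathbf R_{12}\\ \mathbf 0&\mathbf R_{22}\end{bmatrix}$ with $\mathbf A_1\in\mathbb C^{m\times(n-k)}$ and $\mathbf R_{22}\in\mathbb C^{k\times k}$. If $\sigma_i(\mathbf A)<\sigma_1(\mathbf A_1)$ for $i=1,\dots,k$, then for $i=1,\dots,k$, $$\sigma_i(\mathbf R_{22})\le\Big[\frac{\sigma_n(\mathbf A)}{\sigma_1(\mathbf A_1)}+1\Big]\sigma_i(\mathbf A).$$
   Context: For a matrix $\mathbf B\in\mathbb C^{p\times q}$ with $p\ge q$, $\sigma_1(\mathbf B)\le\dots\le\sigma_q(\mathbf B)$ denote its singular values in increasing order; thus $\sigma_1(\mathbf A_1)$ is the smallest singular value of $\mathbf A_1$ and $\sigma_n(\mathbf A)$ the largest of $\mathbf A$. *)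

theory Defs
  imports "Jordan_Normal_Form.Schur_Decomposition"
          "HOL-Computational_Algebra.Fundamental_Theorem_Algebra"
begin

definition sing_vals :: "complex mat \<Rightarrow> real list" where
  "sing_vals B = sorted_list_of_multiset
     (image_mset (\<lambda>z. sqrt (Re z)) (proots (char_poly (mat_adjoint B * B))))"

text \<open>sigma i B, 1-indexed: sigma 1 B is the smallest singular value.\<close>
definition sigma :: "nat \<Rightarrow> complex mat \<Rightarrow> real" where
  "sigma i B = sing_vals B ! (i - 1)"

definition submat :: "'a mat \<Rightarrow> nat \<Rightarrow> nat \<Rightarrow> nat \<Rightarrow> nat \<Rightarrow> 'a mat" where
  "submat M r0 c0 p q = mat p q (\<lambda>(i, j). M $$ (r0 + i, c0 + j))"

end

theory Submission
  imports Defs "HOL-Analysis.L2_Norm"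
begin

(* Put l = n - k, s = sigma_i(A), s1 = sigma_1(A1) and sn = sigma_n(A).  Since Q is an
   isometry, A and A1 have the singular values of R and of its first l columns C, so
   everything is a statement about the upper triangular R = [R11 R12; 0 R22].
   Split v = (v1, x) into its first l and last k entries.  If |Rv| <= s |v|, then with
   g = top part of Rv and f = top part of R (0, x):
     |Rv|^2 = |g|^2 + |R22 x|^2,   |f|^2 + |R22 x|^2 = |R (0,x)|^2 <= sn^2 |x|^2,
     C v1 = g - f,  hence  s1 |v1| <= |g| + |f|.
   Eliminating |g|, |f| and |v1| with s < s1 yields |R22 x| <= (sn/s1 + 1) s |x|, and x = 0
   forces v = 0.  By Courant-Fischer, the vectors v in the span of the right singular
   vectors of R belonging to its i smallest singular values satisfy |Rv| <= s |v|; the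
   injective map v -> x sends this i-dimensional space to a space meeting the
   (k-i+1)-dimensional space on which |R22 x| >= sigma_i(R22) |x|, which gives the bound. *)


lemma adjoint_carrier [simp]: "A \<in> carrier_mat m n \<Longrightarrow> mat_adjoint A \<in> carrier_mat n m"
  unfolding mat_adjoint_def by (auto simp: mat_of_rows_def)

lemma adjoint_dim [simp]:
  "dim_row (mat_adjoint A) = dim_col A" "dim_col (mat_adjoint A) = dim_row A"
  unfolding mat_adjoint_def by (auto simp: mat_of_rows_def)

lemma adjoint_index [simp]:
  "i < dim_col A \<Longrightarrow> j < dim_row A \<Longrightarrow> mat_adjoint A $$ (i,j) = conjugate (A $$ (j,i))"
  unfolding mat_adjoint_def by (auto simp: mat_of_rows_def)

lemma adjoint_adjoint [simp]: "mat_adjoint (mat_adjoint (A::complex mat)) = A"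
  by (rule eq_matI) auto

lemma adjoint_mult:
  assumes A: "(A::complex mat) \<in> carrier_mat m n" and B: "B \<in> carrier_mat n p"
  shows "mat_adjoint (A * B) = mat_adjoint B * mat_adjoint A"
proof (rule eq_matI)
  fix i j assume "i < dim_row (mat_adjoint B * mat_adjoint A)"
    and "j < dim_col (mat_adjoint B * mat_adjoint A)"
  then have i: "i < p" and j: "j < m" using A B by auto
  have "mat_adjoint (A * B) $$ (i, j) = conjugate (\<Sum>t<n. A $$ (j,t) * B $$ (t,i))"
    using A B i j by (auto simp: scalar_prod_def atLeast0LessThan intro!: sum.cong)
  also have "\<dots> = (\<Sum>t<n. conjugate (B $$ (t,i)) * conjugate (A $$ (j,t)))"
    by (simp add: sum_conjugate mult.commute)
  also have "\<dots> = (mat_adjoint B * mat_adjoint A) $$ (i,j)"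
    using A B i j by (auto simp: scalar_prod_def atLeast0LessThan intro!: sum.cong)
  finally show "mat_adjoint (A * B) $$ (i, j) = (mat_adjoint B * mat_adjoint A) $$ (i, j)" .
qed (use A B in auto)

(* Products of square matrices of equal size; lets the simplifier apply associativity. *)
lemma square_mult_carrier:
  "A \<in> carrier_mat n n \<Longrightarrow> B \<in> carrier_mat n n \<Longrightarrow> A * B \<in> carrier_mat n n"
  by simp

lemma adjoint_mult_self_index:
  assumes "(W::complex mat) \<in> carrier_mat m n" and "i < n" and "j < n"
  shows "(mat_adjoint W * W) $$ (i,j) = col W j \<bullet>c col W i"
  using assms by (simp add: scalar_prod_def mult.commute)

lemma mult_mat_vec_index_sum:
  assumes "(A::complex mat) \<in> carrier_mat a b" and "v \<in> carrier_vec b" and "r < a"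
  shows "(A *\<^sub>v v) $ r = (\<Sum>t<b. A $$ (r,t) * v $ t)"
  using assms by (auto simp: scalar_prod_def atLeast0LessThan intro!: sum.cong)

lemma sum_lessThan_split:
  assumes "l \<le> (n::nat)"
  shows "(\<Sum>j<n. f j) = (\<Sum>j<l. f j) + (\<Sum>j<n-l. f (l+j))"
proof -
  have "(\<Sum>j<n. f j) = (\<Sum>j\<in>{0..<l}. f j) + (\<Sum>j\<in>{l..<n}. f j)"
    using sum.atLeastLessThan_concat[of 0 l n f] assms by (simp add: atLeast0LessThan)
  moreover have "(\<Sum>j\<in>{l..<n}. f j) = (\<Sum>j\<in>{0..<n-l}. f (j + l))"
    using sum.shift_bounds_nat_ivl[of f 0 l "n-l"] assms by simp
  ultimately show ?thesis by (simp add: atLeast0LessThan add.commute)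
qed


definition sq_norm :: "complex vec \<Rightarrow> real" where
  "sq_norm v = (\<Sum>i<dim_vec v. (cmod (v$i))^2)"

lemma sq_norm_nonneg [simp]: "0 \<le> sq_norm v"
  unfolding sq_norm_def by (auto intro: sum_nonneg)

lemma cscalar_prod_self: "v \<bullet>c v = complex_of_real (sq_norm v)"
proof -
  have "\<And>z. z * cnj z = complex_of_real ((cmod z)^2)"
    by (metis complex_norm_square of_real_power)
  then show ?thesis unfolding scalar_prod_def sq_norm_def by (simp add: atLeast0LessThan)
qed

lemma sq_norm_eq_0_iff:
  assumes "v \<in> carrier_vec n"
  shows "sq_norm v = 0 \<longleftrightarrow> v = 0\<^sub>v n"
proof
  assume "sq_norm v = 0"
  then have "\<forall>i\<in>{..<dim_vec v}. (cmod (v$i))^2 = 0"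
    unfolding sq_norm_def by (subst sum_nonneg_eq_0_iff[symmetric]) auto
  then show "v = 0\<^sub>v n" using assms by (intro eq_vecI) auto
qed (simp add: sq_norm_def)

lemma cscalar_prod_adjoint:
  assumes A: "(A::complex mat) \<in> carrier_mat m n"
    and x: "x \<in> carrier_vec n" and y: "y \<in> carrier_vec m"
  shows "(A *\<^sub>v x) \<bullet>c y = x \<bullet>c (mat_adjoint A *\<^sub>v y)"
proof -
  have "(A *\<^sub>v x) \<bullet>c y = (\<Sum>i<m. (\<Sum>j<n. A $$ (i,j) * x $ j) * cnj (y $ i))"
    using A x y by (simp add: scalar_prod_def atLeast0LessThan)
  also have "\<dots> = (\<Sum>j<n. \<Sum>i<m. x $ j * (A $$ (i,j) * cnj (y $ i)))"
    by (subst sum.swap) (simp add: sum_distrib_right sum_distrib_left mult_ac)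
  also have "\<dots> = x \<bullet>c (mat_adjoint A *\<^sub>v y)"
    using A x y by (simp add: scalar_prod_def atLeast0LessThan sum_distrib_left)
  finally show ?thesis .
qed

lemma sq_norm_mult_mat_vec:
  assumes A: "(A::complex mat) \<in> carrier_mat m n" and x: "x \<in> carrier_vec n"
  shows "complex_of_real (sq_norm (A *\<^sub>v x)) = x \<bullet>c ((mat_adjoint A * A) *\<^sub>v x)"
proof -
  have "complex_of_real (sq_norm (A *\<^sub>v x)) = x \<bullet>c (mat_adjoint A *\<^sub>v (A *\<^sub>v x))"
    using cscalar_prod_adjoint[OF A x mult_mat_vec_carrier[OF A x]] by (simp add: cscalar_prod_self)
  also have "mat_adjoint A *\<^sub>v (A *\<^sub>v x) = (mat_adjoint A * A) *\<^sub>v x"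
    using A x by (simp add: assoc_mult_mat_vec[symmetric, of _ n m _ n])
  finally show ?thesis .
qed

lemma sq_norm_isometry:
  assumes U: "(U::complex mat) \<in> carrier_mat m n" and UU: "mat_adjoint U * U = 1\<^sub>m n"
    and x: "x \<in> carrier_vec n"
  shows "sq_norm (U *\<^sub>v x) = sq_norm x"
proof -
  have "complex_of_real (sq_norm (U *\<^sub>v x)) = complex_of_real (sq_norm x)"
    using sq_norm_mult_mat_vec[OF U x] UU x by (simp add: cscalar_prod_self)
  then show ?thesis by simp
qed

lemma gram_isometry_mult:
  assumes Q: "(Q::complex mat) \<in> carrier_mat m n" and B: "B \<in> carrier_mat n p"
    and QQ: "mat_adjoint Q * Q = 1\<^sub>m n"
  shows "mat_adjoint (Q * B) * (Q * B) = mat_adjoint B * B"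
proof -
  have "mat_adjoint (Q * B) * (Q * B) = mat_adjoint B * (mat_adjoint Q * (Q * B))"
    unfolding adjoint_mult[OF Q B]
    by (rule assoc_mult_mat[OF adjoint_carrier[OF B] adjoint_carrier[OF Q] mult_carrier_mat[OF Q B]])
  also have "mat_adjoint Q * (Q * B) = B"
    using assoc_mult_mat[OF adjoint_carrier[OF Q] Q B] QQ B by simp
  finally show ?thesis .
qed

lemma unitary_coordinates:
  assumes U: "(U::complex mat) \<in> carrier_mat q q" "U * mat_adjoint U = 1\<^sub>m q"
    and x: "x \<in> carrier_vec q"
  shows "U *\<^sub>v (mat_adjoint U *\<^sub>v x) = x" and "sq_norm (mat_adjoint U *\<^sub>v x) = sq_norm x"
proof -
  show "U *\<^sub>v (mat_adjoint U *\<^sub>v x) = x"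
    using U x by (simp add: assoc_mult_mat_vec[symmetric, of _ q q _ q])
  have "mat_adjoint (mat_adjoint U) * mat_adjoint U = 1\<^sub>m q" using U by simp
  then show "sq_norm (mat_adjoint U *\<^sub>v x) = sq_norm x"
    using sq_norm_isometry[of "mat_adjoint U" q q x] U x by simp
qed

lemma norm_diff_le:
  assumes "dim_vec a = d" "dim_vec b = d"
  shows "sqrt (sq_norm (vec d (\<lambda>j. a$j - b$j))) \<le> sqrt (sq_norm a) + sqrt (sq_norm b)"
proof -
  have L2: "\<And>v. dim_vec v = d \<Longrightarrow> sqrt (sq_norm v) = L2_set (\<lambda>j. cmod (v$j)) {..<d}"
    unfolding sq_norm_def L2_set_def by simp
  have "sqrt (sq_norm (vec d (\<lambda>j. a$j - b$j))) = L2_set (\<lambda>j. cmod (a$j - b$j)) {..<d}"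
    unfolding sq_norm_def L2_set_def by simp
  also have "\<dots> \<le> L2_set (\<lambda>j. cmod (a$j) + cmod (b$j)) {..<d}"
    by (rule L2_set_mono) (auto simp: norm_triangle_ineq4)
  also have "\<dots> \<le> L2_set (\<lambda>j. cmod (a$j)) {..<d} + L2_set (\<lambda>j. cmod (b$j)) {..<d}"
    by (rule L2_set_triangle_ineq)
  also have "\<dots> = sqrt (sq_norm a) + sqrt (sq_norm b)" using L2 assms by simp
  finally show ?thesis .
qed


definition diag_list_mat :: "complex list \<Rightarrow> complex mat" where
  "diag_list_mat es = mat (length es) (length es) (\<lambda>(i,j). if i = j then es ! i else 0)"

lemma proots_prod_linear: "proots (\<Prod>e\<leftarrow>es. [:-e, 1:]) = mset (es :: complex list)"
proof (induction es)
  case (Cons a es)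
  have "(\<Prod>e\<leftarrow>es. [:-e, 1:]) \<noteq> 0" by (auto simp: prod_list_zero_iff)
  then have "proots ([:-a,1:] * (\<Prod>e\<leftarrow>es. [:-e, 1:])) =
      proots [:-a,1:] + proots (\<Prod>e\<leftarrow>es. [:-e, 1:])"
    by (intro proots_mult) auto
  moreover have "proots [:-a,1:] = {#a#}" using proots_linear_factor[of "-a"] by simp
  ultimately show ?case using Cons by simp
qed simp

lemma cscalar_prod_diag_list_mat:
  assumes y: "y \<in> carrier_vec (length es)"
  shows "y \<bullet>c (diag_list_mat es *\<^sub>v y) = (\<Sum>j<length es. cnj (es!j) * y$j * cnj (y$j))"
proof -
  have "diag_list_mat es *\<^sub>v y = vec (length es) (\<lambda>j. es!j * y$j)"
  proof (rule eq_vecI)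
    fix j assume "j < dim_vec (vec (length es) (\<lambda>j. es!j * y$j))"
    then have j: "j < length es" by simp
    have "(diag_list_mat es *\<^sub>v y) $ j = (\<Sum>t<length es. (if j = t then es!j else 0) * y$t)"
      using j y by (simp add: diag_list_mat_def scalar_prod_def atLeast0LessThan)
    also have "\<dots> = (\<Sum>t<length es. if j = t then es!j * y$t else 0)" by (rule sum.cong) auto
    finally show "(diag_list_mat es *\<^sub>v y) $ j = vec (length es) (\<lambda>j. es ! j * y $ j) $ j"
      using j by simp
  qed (simp add: diag_list_mat_def)
  then show ?thesis using y by (simp add: scalar_prod_def atLeast0LessThan mult_ac)
qed

definition unit_dir :: "complex vec \<Rightarrow> complex vec" where
  "unit_dir w = complex_of_real (1 / sqrt (sq_norm w)) \<cdot>\<^sub>v w"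

lemma cscalar_prod_smult_real:
  "dim_vec a = dim_vec b \<Longrightarrow>
   (complex_of_real c \<cdot>\<^sub>v a) \<bullet>c (complex_of_real d \<cdot>\<^sub>v b) = complex_of_real (c * d) * (a \<bullet>c b)"
  unfolding scalar_prod_def by (simp add: sum_distrib_left mult_ac)

lemma orthonormal_cols_isometry:
  fixes us :: "complex vec list"
  assumes len: "length us = n" and car: "\<And>i. i < n \<Longrightarrow> us ! i \<in> carrier_vec d"
    and orth: "\<And>i j. i < n \<Longrightarrow> j < n \<Longrightarrow> us ! j \<bullet>c us ! i = (if i = j then 1 else 0)"
  shows "mat_adjoint (mat_of_cols d us) * mat_of_cols d us = 1\<^sub>m n"
proof (rule eq_matI)
  fix i j assume "i < dim_row (1\<^sub>m n)" "j < dim_col (1\<^sub>m n)"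
  then have i: "i < n" and j: "j < n" by auto
  have W: "mat_of_cols d us \<in> carrier_mat d n" using len by auto
  show "(mat_adjoint (mat_of_cols d us) * mat_of_cols d us) $$ (i,j) = 1\<^sub>m n $$ (i,j)"
    using adjoint_mult_self_index[OF W i j] orth[OF i j] car i j len by simp
qed (use len in auto)

lemma unitary_with_first_column:
  assumes v: "v \<in> carrier_vec N" and v0: "v \<noteq> 0\<^sub>v N"
  obtains W where "W \<in> carrier_mat N N" "mat_adjoint W * W = 1\<^sub>m N" "col W 0 = unit_dir v"
proof -
  interpret cof_vec_space N "TYPE(complex)" .
  define b where "b = basis_completion v"
  from basis_completion[OF v v0, folded b_def]
  have span_b: "span (set b) = carrier_vec N" and dist_b: "distinct b"
    and indep: "\<not> lin_dep (set b)" and b: "set b \<subseteq> carrier_vec N"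
    unfolding basis_def by auto
  have len_b: "length b = N"
    using b dist_b indep span_b dim_is_n by (metis basis_def dim_basis distinct_card finite_set)
  have N0: "0 < N" using v v0 by (cases N) auto
  from len_b N0 obtain vs where bv: "b = v # vs"
    unfolding b_def basis_completion_def Let_def by (cases b) auto
  define ws where "ws = gram_schmidt N b"
  from gram_schmidt_result[OF b dist_b indep ws_def]
  have ws: "set ws \<subseteq> carrier_vec N" "corthogonal ws" "length ws = N" by (auto simp: len_b)
  have ws0: "ws ! 0 = v"
    using gram_schmidt_hd[OF v, of vs, folded bv ws_def] ws(3) N0 by (cases ws) auto
  have ws_car: "\<And>i. i < N \<Longrightarrow> ws ! i \<in> carrier_vec N" using ws by auto
  have ws_pos: "\<And>t. t < N \<Longrightarrow> 0 < sq_norm (ws ! t)"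
  proof -
    fix t assume t: "t < N"
    have "ws ! t \<bullet>c ws ! t \<noteq> 0" using corthogonalD[OF ws(2), of t t] t ws(3) by auto
    then have "ws ! t \<noteq> 0\<^sub>v N" by auto
    then show "0 < sq_norm (ws ! t)"
      using sq_norm_eq_0_iff[OF ws_car[OF t]] sq_norm_nonneg[of "ws ! t"] by linarith
  qed
  define us where "us = map unit_dir ws"
  have len_us: "length us = N" unfolding us_def using ws by simp
  have us_car: "\<And>i. i < N \<Longrightarrow> us ! i \<in> carrier_vec N"
    unfolding us_def unit_dir_def using ws by auto
  have us_orth: "us ! j \<bullet>c us ! i = (if i = j then 1 else 0)" if i: "i < N" and j: "j < N" for i j
  proof -
    have "us ! j \<bullet>c us ! i = complex_of_real (1 / sqrt (sq_norm (ws!j)) * (1 / sqrt (sq_norm (ws!i))))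
        * (ws!j \<bullet>c ws!i)"
      using i j ws(3) unfolding us_def unit_dir_def
      by (simp only: nth_map) (rule cscalar_prod_smult_real, use ws_car[OF i] ws_car[OF j] in auto)
    also have "\<dots> = (if i = j then 1 else 0)"
      using ws_pos[OF i] corthogonalD[OF ws(2), of j i] i j ws(3)
      by (cases "i = j") (auto simp: cscalar_prod_self)
    finally show ?thesis .
  qed
  define W where "W = mat_of_cols N us"
  have "W \<in> carrier_mat N N" unfolding W_def using mat_of_cols_carrier(1)[of N us] len_us by simp
  moreover have "mat_adjoint W * W = 1\<^sub>m N"
    unfolding W_def by (rule orthonormal_cols_isometry[OF len_us us_car us_orth])
  moreover have "col W 0 = unit_dir v"
    unfolding W_def using len_us us_car[OF N0] N0 ws0 ws(3) by (simp add: us_def)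
  ultimately show ?thesis by (rule that)
qed

lemma hermitian_block_split:
  fixes D :: "complex mat"
  assumes D: "D \<in> carrier_mat (Suc n) (Suc n)" and hermD: "mat_adjoint D = D"
    and col0: "\<And>i. i < Suc n \<Longrightarrow> D $$ (i,0) = (if i = 0 then e else 0)"
  obtains H' where "H' \<in> carrier_mat n n" "mat_adjoint H' = H'"
    "D = four_block_mat (mat 1 1 (\<lambda>_. e)) (0\<^sub>m 1 n) (0\<^sub>m n 1) H'"
proof -
  have row0: "D $$ (0,j) = cnj (D $$ (j,0))" if "j < Suc n" for j
    using arg_cong[OF hermD, of "\<lambda>M. M $$ (0,j)"] D that by simp
  have e_real: "cnj e = e" using row0[of 0] col0[of 0] by simp
  define H' where "H' = mat n n (\<lambda>(i,j). D $$ (Suc i, Suc j))"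
  have "H' \<in> carrier_mat n n" unfolding H'_def by simp
  moreover have "mat_adjoint H' = H'"
  proof (rule eq_matI)
    fix i j assume "i < dim_row H'" "j < dim_col H'"
    then show "mat_adjoint H' $$ (i, j) = H' $$ (i, j)"
      using arg_cong[OF hermD, of "\<lambda>M. M $$ (Suc i, Suc j)"] D unfolding H'_def by simp
  qed (simp_all add: H'_def)
  moreover have "D = four_block_mat (mat 1 1 (\<lambda>_. e)) (0\<^sub>m 1 n) (0\<^sub>m n 1) H'"
  proof (rule eq_matI)
    fix i j assume "i < dim_row (four_block_mat (mat 1 1 (\<lambda>_. e)) (0\<^sub>m 1 n) (0\<^sub>m n 1) H')"
      "j < dim_col (four_block_mat (mat 1 1 (\<lambda>_. e)) (0\<^sub>m 1 n) (0\<^sub>m n 1) H')"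
    then have i: "i < Suc n" and j: "j < Suc n" by (auto simp: H'_def)
    show "D $$ (i, j) = four_block_mat (mat 1 1 (\<lambda>_. e)) (0\<^sub>m 1 n) (0\<^sub>m n 1) H' $$ (i, j)"
      using row0[OF j] col0[OF j] col0[OF i] col0[of 0] e_real i j
      by (cases i; cases j) (auto simp: H'_def)
  qed (use D in \<open>auto simp: H'_def\<close>)
  ultimately show ?thesis by (rule that)
qed

lemma hermitian_deflation:
  fixes H W :: "complex mat"
  assumes H: "H \<in> carrier_mat (Suc n) (Suc n)" and herm: "mat_adjoint H = H"
    and W: "W \<in> carrier_mat (Suc n) (Suc n)" and WW: "mat_adjoint W * W = 1\<^sub>m (Suc n)"
    and ev: "H *\<^sub>v col W 0 = e \<cdot>\<^sub>v col W 0"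
  obtains H' where "H' \<in> carrier_mat n n" "mat_adjoint H' = H'"
    "mat_adjoint W * H * W = four_block_mat (mat 1 1 (\<lambda>_. e)) (0\<^sub>m 1 n) (0\<^sub>m n 1) H'"
    "char_poly H = [:-e, 1:] * char_poly H'"
proof -
  let ?N = "Suc n"
  have WW': "W * mat_adjoint W = 1\<^sub>m ?N"
    using mat_mult_left_right_inverse[OF adjoint_carrier[OF W] W WW] .
  define D where "D = mat_adjoint W * H * W"
  have D: "D \<in> carrier_mat ?N ?N" unfolding D_def using W H by auto
  have hermD: "mat_adjoint D = D"
    unfolding D_def using W H herm
    by (simp add: adjoint_mult[of _ ?N ?N _ ?N] assoc_mult_mat[of _ ?N ?N _ ?N _ ?N])
  have W0: "col W 0 \<in> carrier_vec ?N" using col_dim[of W 0] W by simp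
  have "col D 0 = (mat_adjoint W * H) *\<^sub>v col W 0"
    unfolding D_def using W H by (subst col_mult2[of _ ?N ?N]) auto
  also have "\<dots> = e \<cdot>\<^sub>v (mat_adjoint W *\<^sub>v col W 0)"
    using W H W0 by (simp add: assoc_mult_mat_vec[of _ ?N ?N _ ?N] ev mult_mat_vec[OF adjoint_carrier[OF W] W0])
  also have "mat_adjoint W *\<^sub>v col W 0 = col (mat_adjoint W * W) 0"
    using W by (subst col_mult2[of _ ?N ?N]) auto
  finally have colD: "col D 0 = e \<cdot>\<^sub>v unit_vec ?N 0" using WW by simp
  have D_col0: "D $$ (i,0) = (if i = 0 then e else 0)" if i: "i < ?N" for i
  proof -
    have "D $$ (i,0) = col D 0 $ i" using D i by simp
    then show ?thesis using colD i by simp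
  qed
  obtain H' where H': "H' \<in> carrier_mat n n" "mat_adjoint H' = H'"
    and block: "D = four_block_mat (mat 1 1 (\<lambda>_. e)) (0\<^sub>m 1 n) (0\<^sub>m n 1) H'"
    by (rule hermitian_block_split[OF D hermD D_col0])
  have "similar_mat_wit H D W (mat_adjoint W)"
    unfolding similar_mat_wit_def Let_def
  proof (intro conjI)
    have "W * D * mat_adjoint W = (W * mat_adjoint W) * H * (W * mat_adjoint W)"
      unfolding D_def using W H adjoint_carrier[OF W]
      by (simp add: assoc_mult_mat[of _ ?N ?N _ ?N _ ?N] square_mult_carrier)
    then show "H = W * D * mat_adjoint W" using WW' H by simp
  qed (use W H D WW WW' in auto)
  then have "char_poly H = char_poly D" by (intro char_poly_similar) (auto simp: similar_mat_def)
  also have "\<dots> = char_poly (mat 1 1 (\<lambda>_. e)) * char_poly H'"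
    unfolding block by (rule char_poly_four_block_zeros_col) (use H' in auto)
  also have "char_poly (mat 1 1 (\<lambda>_. e)) = [:-e, 1:]"
    by (simp add: char_poly_defs det_def sign_def)
  finally show ?thesis using that H' block unfolding D_def by blast
qed

lemma block_conjugation:
  fixes U' H' :: "complex mat"
  assumes U': "U' \<in> carrier_mat n n" and UU': "mat_adjoint U' * U' = 1\<^sub>m n"
    and H': "H' \<in> carrier_mat n n"
  defines "B \<equiv> four_block_mat (1\<^sub>m 1) (0\<^sub>m 1 n) (0\<^sub>m n 1) U'"
  shows "B \<in> carrier_mat (Suc n) (Suc n)" and "mat_adjoint B * B = 1\<^sub>m (Suc n)"
    and "mat_adjoint B * four_block_mat (mat 1 1 (\<lambda>_. e)) (0\<^sub>m 1 n) (0\<^sub>m n 1) H' * B =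
      four_block_mat (mat 1 1 (\<lambda>_. e)) (0\<^sub>m 1 n) (0\<^sub>m n 1) (mat_adjoint U' * H' * U')"
proof -
  have E: "mat 1 1 (\<lambda>_. e) \<in> carrier_mat 1 1" by simp
  have adjB: "mat_adjoint B = four_block_mat (1\<^sub>m 1) (0\<^sub>m 1 n) (0\<^sub>m n 1) (mat_adjoint U')"
    by (rule eq_matI) (use U' in \<open>auto simp: B_def\<close>)
  show "B \<in> carrier_mat (Suc n) (Suc n)" unfolding B_def using U' by auto
  show "mat_adjoint B * B = 1\<^sub>m (Suc n)"
    using U' UU' unfolding adjB unfolding B_def
    by (subst mult_four_block_mat[OF one_carrier_mat zero_carrier_mat zero_carrier_mat
          adjoint_carrier[OF U'] one_carrier_mat zero_carrier_mat zero_carrier_mat U']) auto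
  have "mat_adjoint B * four_block_mat (mat 1 1 (\<lambda>_. e)) (0\<^sub>m 1 n) (0\<^sub>m n 1) H' =
      four_block_mat (mat 1 1 (\<lambda>_. e)) (0\<^sub>m 1 n) (0\<^sub>m n 1) (mat_adjoint U' * H')"
    unfolding adjB using U' H'
    by (subst mult_four_block_mat[OF one_carrier_mat zero_carrier_mat zero_carrier_mat
          adjoint_carrier[OF U'] E zero_carrier_mat zero_carrier_mat H']) auto
  also have "\<dots> * B = four_block_mat (mat 1 1 (\<lambda>_. e)) (0\<^sub>m 1 n) (0\<^sub>m n 1) (mat_adjoint U' * H' * U')"
    unfolding B_def using U' H'
    by (subst mult_four_block_mat[OF E zero_carrier_mat zero_carrier_mat
          mult_carrier_mat[OF adjoint_carrier[OF U'] H'] one_carrier_mat zero_carrier_mat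
          zero_carrier_mat U']) auto
  finally show "mat_adjoint B * four_block_mat (mat 1 1 (\<lambda>_. e)) (0\<^sub>m 1 n) (0\<^sub>m n 1) H' * B =
      four_block_mat (mat 1 1 (\<lambda>_. e)) (0\<^sub>m 1 n) (0\<^sub>m n 1) (mat_adjoint U' * H' * U')" .
qed

lemma least_eigenpair:
  fixes H :: "complex mat"
  assumes H: "H \<in> carrier_mat (Suc n) (Suc n)"
  obtains e v where "v \<in> carrier_vec (Suc n)" "v \<noteq> 0\<^sub>v (Suc n)" "H *\<^sub>v v = e \<cdot>\<^sub>v v"
    "\<And>x. poly (char_poly H) x = 0 \<Longrightarrow> Re e \<le> Re x"
proof -
  obtain as where cp_as: "char_poly H = (\<Prod>a\<leftarrow>as. [:- a, 1:])" and len_as: "length as = Suc n"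
    using char_poly_factorized[OF H] by auto
  have roots: "poly (char_poly H) x = 0 \<longleftrightarrow> x \<in> set as" for x
    unfolding cp_as by (auto simp: poly_prod_list prod_list_zero_iff o_def)
  define e where "e = arg_min_list Re as"
  have as0: "as \<noteq> []" using len_as by auto
  have e_min: "Re e \<le> Re x" if "poly (char_poly H) x = 0" for x
    unfolding e_def using f_arg_min_list_f[OF as0, of Re] that roots by (simp add: Min_le)
  have "poly (char_poly H) e = 0" unfolding roots e_def by (rule arg_min_list_in[OF as0])
  then have ev: "eigenvalue H e" using eigenvalue_root_char_poly[OF H] by simp
  from find_eigenvector[OF H ev] have "eigenvector H (find_eigenvector H e) e" .
  then show ?thesis using that e_min H unfolding eigenvector_def by auto
qed

theorem hermitian_spectral:
  fixes H :: "complex mat"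
  assumes "H \<in> carrier_mat n n" and "mat_adjoint H = H"
  shows "\<exists>U es. U \<in> carrier_mat n n \<and> mat_adjoint U * U = 1\<^sub>m n \<and> length es = n \<and>
     mat_adjoint U * H * U = diag_list_mat es \<and> char_poly H = (\<Prod>e\<leftarrow>es. [:-e,1:]) \<and>
     sorted (map Re es)"
  using assms
proof (induction n arbitrary: H)
  case 0
  obtain as where "char_poly H = (\<Prod>a\<leftarrow>as. [:- a, 1:])" "length as = 0"
    using char_poly_factorized[OF 0(1)] by auto
  then show ?case
    by (intro exI[of _ "1\<^sub>m 0"] exI[of _ "[]"]) (use 0 in \<open>auto intro!: eq_matI simp: diag_list_mat_def\<close>)
next
  case (Suc n)
  note H = Suc.prems(1) and herm = Suc.prems(2)
  let ?N = "Suc n"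
  obtain e v where v: "v \<in> carrier_vec ?N" and v0: "v \<noteq> 0\<^sub>v ?N" and Hv: "H *\<^sub>v v = e \<cdot>\<^sub>v v"
    and e_min: "\<And>x. poly (char_poly H) x = 0 \<Longrightarrow> Re e \<le> Re x"
    using least_eigenpair[OF H] by blast
  obtain W where W: "W \<in> carrier_mat ?N ?N" and WW: "mat_adjoint W * W = 1\<^sub>m ?N"
    and W0: "col W 0 = unit_dir v"
    using unitary_with_first_column[OF v v0] .
  have "H *\<^sub>v col W 0 = e \<cdot>\<^sub>v col W 0"
    unfolding W0 unit_dir_def using H v Hv by (simp add: mult_mat_vec smult_smult_assoc mult.commute)
  from hermitian_deflation[OF H herm W WW this]
  obtain H' where H': "H' \<in> carrier_mat n n" and hermH': "mat_adjoint H' = H'"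
    and D: "mat_adjoint W * H * W = four_block_mat (mat 1 1 (\<lambda>_. e)) (0\<^sub>m 1 n) (0\<^sub>m n 1) H'"
    and cpH: "char_poly H = [:-e, 1:] * char_poly H'" .
  from Suc.IH[OF H' hermH'] obtain U' es' where U': "U' \<in> carrier_mat n n"
    and UU': "mat_adjoint U' * U' = 1\<^sub>m n" and len': "length es' = n"
    and D': "mat_adjoint U' * H' * U' = diag_list_mat es'"
    and cp': "char_poly H' = (\<Prod>e\<leftarrow>es'. [:-e,1:])" and sorted': "sorted (map Re es')" by blast
  have e_le: "Re e \<le> Re x" if "x \<in> set es'" for x
  proof -
    have "poly (char_poly H) x = 0" unfolding cpH cp' using that
      by (simp add: poly_prod_list prod_list_zero_iff o_def)
    then show ?thesis by (rule e_min)
  qed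
  define B where "B = four_block_mat (1\<^sub>m 1) (0\<^sub>m 1 n) (0\<^sub>m n 1) U'"
  note B = block_conjugation[OF U' UU' H', folded B_def]
  define U where "U = W * B"
  have U: "U \<in> carrier_mat ?N ?N" unfolding U_def using W B(1) by auto
  have UU: "mat_adjoint U * U = 1\<^sub>m ?N" unfolding U_def gram_isometry_mult[OF W B(1) WW] by (rule B(2))
  have "mat_adjoint U * H * U = mat_adjoint B * (mat_adjoint W * H * W) * B"
    unfolding U_def adjoint_mult[OF W B(1)] using W B(1) H adjoint_carrier[OF W] adjoint_carrier[OF B(1)]
    by (simp add: assoc_mult_mat[of _ ?N ?N _ ?N _ ?N] square_mult_carrier)
  also have "\<dots> = four_block_mat (mat 1 1 (\<lambda>_. e)) (0\<^sub>m 1 n) (0\<^sub>m n 1) (mat_adjoint U' * H' * U')"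
    unfolding D by (rule B(3))
  also have "\<dots> = diag_list_mat (e # es')"
    unfolding D' by (rule eq_matI) (auto simp: diag_list_mat_def len')
  finally show ?case
    by (intro exI[of _ U] exI[of _ "e # es'"]) (use U UU cpH cp' len' sorted' e_le in auto)
qed


lemma sing_vals_rayleigh:
  assumes B: "(B::complex mat) \<in> carrier_mat p q"
  obtains U lam where "U \<in> carrier_mat q q" "mat_adjoint U * U = 1\<^sub>m q" "U * mat_adjoint U = 1\<^sub>m q"
    "length lam = q" "sorted lam" "\<forall>j<q. 0 \<le> lam!j"
    "\<forall>j. 1 \<le> j \<longrightarrow> j \<le> q \<longrightarrow> (sigma j B)^2 = lam!(j-1) \<and> 0 \<le> sigma j B"
    "\<forall>y\<in>carrier_vec q. sq_norm (B *\<^sub>v (U *\<^sub>v y)) = (\<Sum>j<q. lam!j * (cmod (y$j))^2)"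
proof -
  let ?H = "mat_adjoint B * B"
  have H: "?H \<in> carrier_mat q q" using B by auto
  have herm: "mat_adjoint ?H = ?H" using adjoint_mult[OF adjoint_carrier[OF B] B] by simp
  obtain U es where U: "U \<in> carrier_mat q q" and UU: "mat_adjoint U * U = 1\<^sub>m q"
    and les: "length es = q" and D: "mat_adjoint U * ?H * U = diag_list_mat es"
    and cp: "char_poly ?H = (\<Prod>e\<leftarrow>es. [:-e,1:])" and srt: "sorted (map Re es)"
    using hermitian_spectral[OF H herm] by blast
  have UU': "U * mat_adjoint U = 1\<^sub>m q"
    using mat_mult_left_right_inverse[OF adjoint_carrier[OF U] U UU] .
  have BU: "B * U \<in> carrier_mat p q" using B U by simp
  have D': "mat_adjoint (B * U) * (B * U) = diag_list_mat es"
    unfolding D[symmetric] adjoint_mult[OF B U]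
    by (simp only: assoc_mult_mat[OF adjoint_carrier[OF U] adjoint_carrier[OF B] BU]
       assoc_mult_mat[OF adjoint_carrier[OF U] mult_carrier_mat[OF adjoint_carrier[OF B] B] U]
       assoc_mult_mat[OF adjoint_carrier[OF B] B U])
  define lam where "lam = map Re es"
  have es_lam: "es!j = complex_of_real (lam!j)" and lam_nn: "0 \<le> lam!j" if j: "j < q" for j
  proof -
    have "es!j = diag_list_mat es $$ (j,j)" using j les by (simp add: diag_list_mat_def)
    also have "\<dots> = complex_of_real (sq_norm (col (B * U) j))"
      unfolding D'[symmetric] adjoint_mult_self_index[OF BU j j] by (rule cscalar_prod_self)
    finally show "es!j = complex_of_real (lam!j)" "0 \<le> lam!j"
      unfolding lam_def using j les by auto
  qed
  have sorted_sqrt: "sorted (map (\<lambda>z. sqrt (Re z)) es)"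
    using srt by (auto simp: sorted_iff_nth_mono)
  have "sing_vals B = map (\<lambda>z. sqrt (Re z)) es"
    unfolding sing_vals_def cp proots_prod_linear
    by (simp only: mset_map[symmetric] sorted_list_of_multiset_mset sorted_sort_id[OF sorted_sqrt])
  then have sv: "\<forall>j. 1 \<le> j \<longrightarrow> j \<le> q \<longrightarrow> (sigma j B)^2 = lam!(j-1) \<and> 0 \<le> sigma j B"
    using lam_nn les unfolding sigma_def lam_def by auto
  have ray: "sq_norm (B *\<^sub>v (U *\<^sub>v y)) = (\<Sum>j<q. lam!j * (cmod (y$j))^2)"
    if y: "y \<in> carrier_vec q" for y
  proof -
    have "complex_of_real (sq_norm (B *\<^sub>v (U *\<^sub>v y))) = y \<bullet>c (diag_list_mat es *\<^sub>v y)"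
      using sq_norm_mult_mat_vec[OF BU y] D' B U y by simp
    also have "\<dots> = (\<Sum>j<q. cnj (es!j) * y$j * cnj (y$j))"
      using cscalar_prod_diag_list_mat[of y es] y les by simp
    also have "\<dots> = (\<Sum>j<q. complex_of_real (lam!j * (cmod (y$j))^2))"
    proof (rule sum.cong)
      fix j assume "j \<in> {..<q}"
      moreover have "y$j * cnj (y$j) = complex_of_real ((cmod (y$j))^2)"
        by (metis complex_norm_square of_real_power)
      ultimately show "cnj (es!j) * y$j * cnj (y$j) = complex_of_real (lam!j * (cmod (y$j))^2)"
        using es_lam[of j] by (simp add: mult.assoc)
    qed simp
    finally show ?thesis by (simp only: of_real_sum[symmetric] of_real_eq_iff)
  qed
  show ?thesis
    by (rule that[OF U UU UU' _ _ _ sv]) (use les srt lam_nn ray in \<open>auto simp: lam_def\<close>)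
qed

lemma sigma_nonneg:
  assumes "(B::complex mat) \<in> carrier_mat p q" and "1 \<le> j" "j \<le> q"
  shows "0 \<le> sigma j B"
  by (rule sing_vals_rayleigh[OF assms(1)]) (use assms in auto)

lemma sigma_upper_on_subspace:
  assumes B: "(B::complex mat) \<in> carrier_mat p q" and i: "1 \<le> i" "i \<le> q"
  obtains U where "U \<in> carrier_mat q q" "mat_adjoint U * U = 1\<^sub>m q" "U * mat_adjoint U = 1\<^sub>m q"
    "\<forall>y\<in>carrier_vec q. (\<forall>j. i \<le> j \<longrightarrow> j < q \<longrightarrow> y$j = 0) \<longrightarrow>
       sq_norm (B *\<^sub>v (U *\<^sub>v y)) \<le> (sigma i B)^2 * sq_norm y"
proof -
  obtain U lam where U: "U \<in> carrier_mat q q" "mat_adjoint U * U = 1\<^sub>m q" "U * mat_adjoint U = 1\<^sub>m q"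
    and l: "length lam = q" "sorted lam" "\<forall>j<q. 0 \<le> lam!j"
    and sg: "\<forall>j. 1 \<le> j \<longrightarrow> j \<le> q \<longrightarrow> (sigma j B)^2 = lam!(j-1) \<and> 0 \<le> sigma j B"
    and r: "\<forall>y\<in>carrier_vec q. sq_norm (B *\<^sub>v (U *\<^sub>v y)) = (\<Sum>j<q. lam!j * (cmod (y$j))^2)"
    by (rule sing_vals_rayleigh[OF B])
  have "sq_norm (B *\<^sub>v (U *\<^sub>v y)) \<le> (sigma i B)^2 * sq_norm y"
    if y: "y \<in> carrier_vec q" and z: "\<forall>j. i \<le> j \<longrightarrow> j < q \<longrightarrow> y$j = 0" for y
  proof -
    have "sq_norm (B *\<^sub>v (U *\<^sub>v y)) = (\<Sum>j<q. lam!j * (cmod (y$j))^2)" using r y by simp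
    also have "\<dots> \<le> (\<Sum>j<q. lam!(i-1) * (cmod (y$j))^2)"
    proof (rule sum_mono)
      fix j assume j: "j \<in> {..<q}"
      show "lam!j * (cmod (y$j))^2 \<le> lam!(i-1) * (cmod (y$j))^2"
      proof (cases "j < i")
        case True
        then show ?thesis using j l i by (intro mult_right_mono) (auto intro: sorted_nth_mono)
      qed (use j z in simp)
    qed
    also have "\<dots> = (sigma i B)^2 * sq_norm y"
      using y sg i by (simp add: sq_norm_def sum_distrib_left)
    finally show ?thesis .
  qed
  then show ?thesis using that U by blast
qed

lemma sigma_lower_on_subspace:
  assumes B: "(B::complex mat) \<in> carrier_mat p q" and i: "1 \<le> i" "i \<le> q"
  obtains U where "U \<in> carrier_mat q q" "mat_adjoint U * U = 1\<^sub>m q" "U * mat_adjoint U = 1\<^sub>m q"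
    "\<forall>y\<in>carrier_vec q. (\<forall>j<i-1. y$j = 0) \<longrightarrow>
       (sigma i B)^2 * sq_norm y \<le> sq_norm (B *\<^sub>v (U *\<^sub>v y))"
proof -
  obtain U lam where U: "U \<in> carrier_mat q q" "mat_adjoint U * U = 1\<^sub>m q" "U * mat_adjoint U = 1\<^sub>m q"
    and l: "length lam = q" "sorted lam" "\<forall>j<q. 0 \<le> lam!j"
    and sg: "\<forall>j. 1 \<le> j \<longrightarrow> j \<le> q \<longrightarrow> (sigma j B)^2 = lam!(j-1) \<and> 0 \<le> sigma j B"
    and r: "\<forall>y\<in>carrier_vec q. sq_norm (B *\<^sub>v (U *\<^sub>v y)) = (\<Sum>j<q. lam!j * (cmod (y$j))^2)"
    by (rule sing_vals_rayleigh[OF B])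
  have "(sigma i B)^2 * sq_norm y \<le> sq_norm (B *\<^sub>v (U *\<^sub>v y))"
    if y: "y \<in> carrier_vec q" and z: "\<forall>j<i-1. y$j = 0" for y
  proof -
    have "(sigma i B)^2 * sq_norm y = (\<Sum>j<q. lam!(i-1) * (cmod (y$j))^2)"
      using y sg i by (simp add: sq_norm_def sum_distrib_left)
    also have "\<dots> \<le> (\<Sum>j<q. lam!j * (cmod (y$j))^2)"
    proof (rule sum_mono)
      fix j assume j: "j \<in> {..<q}"
      show "lam!(i-1) * (cmod (y$j))^2 \<le> lam!j * (cmod (y$j))^2"
      proof (cases "j < i - 1")
        case False
        then show ?thesis using j l i by (intro mult_right_mono) (auto intro: sorted_nth_mono)
      qed (use z in simp)
    qed
    also have "\<dots> = sq_norm (B *\<^sub>v (U *\<^sub>v y))" using r y by simp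
    finally show ?thesis .
  qed
  then show ?thesis using that U by blast
qed

lemma sigma_extreme_bounds:
  assumes B: "(B::complex mat) \<in> carrier_mat p q" and x: "x \<in> carrier_vec q" and q: "0 < q"
  shows "(sigma 1 B)^2 * sq_norm x \<le> sq_norm (B *\<^sub>v x)"
    and "sq_norm (B *\<^sub>v x) \<le> (sigma q B)^2 * sq_norm x"
proof -
  have q1: "1 \<le> q" using q by simp
  obtain U where U: "U \<in> carrier_mat q q" "mat_adjoint U * U = 1\<^sub>m q" "U * mat_adjoint U = 1\<^sub>m q"
    and low: "\<forall>y\<in>carrier_vec q. (\<forall>j<1-1. y$j = 0) \<longrightarrow>
      (sigma 1 B)^2 * sq_norm y \<le> sq_norm (B *\<^sub>v (U *\<^sub>v y))"
    by (rule sigma_lower_on_subspace[OF B le_refl q1])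
  show "(sigma 1 B)^2 * sq_norm x \<le> sq_norm (B *\<^sub>v x)"
    using low[rule_format, of "mat_adjoint U *\<^sub>v x"] unitary_coordinates[OF U(1,3) x]
      mult_mat_vec_carrier[OF adjoint_carrier[OF U(1)] x] by simp
  obtain V where V: "V \<in> carrier_mat q q" "mat_adjoint V * V = 1\<^sub>m q" "V * mat_adjoint V = 1\<^sub>m q"
    and up: "\<forall>y\<in>carrier_vec q. (\<forall>j. q \<le> j \<longrightarrow> j < q \<longrightarrow> y$j = 0) \<longrightarrow>
      sq_norm (B *\<^sub>v (V *\<^sub>v y)) \<le> (sigma q B)^2 * sq_norm y"
    by (rule sigma_upper_on_subspace[OF B q1 le_refl])
  show "sq_norm (B *\<^sub>v x) \<le> (sigma q B)^2 * sq_norm x"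
    using up[rule_format, of "mat_adjoint V *\<^sub>v x"] unitary_coordinates[OF V(1,3) x]
      mult_mat_vec_carrier[OF adjoint_carrier[OF V(1)] x] by simp
qed

(* Multiplying by a matrix with orthonormal columns leaves the singular values unchanged,
   since they depend only on B^H B. *)
lemma sigma_isometry_mult:
  assumes Q: "(Q::complex mat) \<in> carrier_mat m n" and QQ: "mat_adjoint Q * Q = 1\<^sub>m n"
    and B: "B \<in> carrier_mat n p"
  shows "sigma j (Q * B) = sigma j B"
  unfolding sigma_def sing_vals_def gram_isometry_mult[OF Q B QQ] ..


(* The scalar core of the argument.  With G = |g|, H = |f|, N = |v1|, X = |x| and
   z = |R22 x|^2, the three relations of the block estimate and s < s1 force
   z <= ((sn/s1 + 1) s)^2 X^2. *)
lemma gap_inequality: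
  fixes s sn s1 G H N X z :: real
  assumes s0: "0 \<le> s" and ss1: "s < s1" and sn0: "0 \<le> sn" and N0: "0 \<le> N"
    and i: "G^2 + z \<le> s^2 * (N^2 + X^2)"
    and ii: "s1 * N \<le> G + H"
    and iii: "H^2 + z \<le> sn^2 * X^2"
  shows "z \<le> ((sn / s1 + 1) * s)^2 * X^2"
proof -
  have s1p: "0 < s1" using s0 ss1 by linarith
  define a where "a = s^2"
  define b where "b = s1^2"
  have a0: "0 \<le> a" unfolding a_def by simp
  have bp: "0 < b" unfolding b_def using s1p by simp
  have ab: "a < b" unfolding a_def b_def using s0 ss1 by (simp add: power_strict_mono)
  have "(s1 * N)^2 \<le> (G + H)^2" using ii s1p N0 by (intro power_mono) auto
  then have bN: "b * N^2 \<le> (G + H)^2" unfolding b_def by (simp add: power_mult_distrib)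
  have "b * (G^2 + z) \<le> a * (b * N^2) + a * b * X^2"
    using mult_left_mono[OF i, of b] bp unfolding a_def by (simp add: algebra_simps)
  also have "\<dots> \<le> a * (G+H)^2 + a * b * X^2" using bN a0 by (simp add: mult_left_mono)
  finally have bz: "b * z \<le> a * (G+H)^2 - b * G^2 + a * b * X^2" by (simp add: algebra_simps)
  (* completing the square: (a(G+H)^2 - bG^2)(b-a) = abH^2 - ((b-a)G - aH)^2 *)
  have square: "(a * (G+H)^2 - b * G^2) * (b - a) \<le> a * H^2 * b"
  proof -
    have "(a * (G+H)^2 - b * G^2) * (b - a) = a * H^2 * b - ((b - a) * G - a * H)^2"
      by (simp add: power2_eq_square algebra_simps)
    then show ?thesis by simp
  qed
  have "b * z * (b - a) \<le> (a * (G+H)^2 - b * G^2 + a * b * X^2) * (b - a)"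
    using bz ab by (intro mult_right_mono) auto
  then have "b * (z * (b - a)) \<le> b * (a * H^2 + a * X^2 * (b - a))"
    using square by (simp add: algebra_simps)
  then have "z * (b - a) \<le> a * H^2 + a * X^2 * (b - a)"
    using bp by (simp add: mult_le_cancel_left_pos)
  also have "\<dots> \<le> a * (sn^2 * X^2 - z) + a * X^2 * (b - a)"
    using iii a0 by (simp add: mult_left_mono)
  finally have "z * b \<le> a * X^2 * (b - a + sn^2)" by (simp add: algebra_simps)
  also have "\<dots> \<le> a * X^2 * (s1 + sn)^2"
  proof -
    have "b - a + sn^2 \<le> (s1 + sn)^2" unfolding b_def using a0 s1p sn0
      by (simp add: power2_eq_square algebra_simps)
    then show ?thesis using a0 by (intro mult_left_mono) auto
  qed
  finally have zb: "z * b \<le> a * X^2 * (s1 + sn)^2" .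
  have "((sn / s1 + 1) * s)^2 * X^2 = a * X^2 * (s1 + sn)^2 / b"
    unfolding a_def b_def using s1p by (simp add: field_simps power2_eq_square)
  then show ?thesis using zb bp by (simp add: pos_le_divide_eq)
qed

(* The degenerate case X = H = 0 of the same relations: then N = 0. *)
lemma gap_injectivity:
  fixes s s1 G N :: real
  assumes s0: "0 \<le> s" and ss1: "s < s1" and N0: "0 \<le> N"
    and i: "G^2 \<le> s^2 * N^2" and ii: "s1 * N \<le> G"
  shows "N = 0"
proof (rule ccontr)
  assume "N \<noteq> 0"
  then have Np: "0 < N" using N0 by simp
  have "(s1 * N)^2 \<le> G^2" using ii Np ss1 s0 by (intro power_mono) auto
  also have "\<dots> \<le> s^2 * N^2" by (rule i)
  also have "\<dots> < s1^2 * N^2" using Np s0 ss1 by (intro mult_strict_right_mono power_strict_mono) auto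
  finally show False by (simp add: power_mult_distrib)
qed


lemma submat_carrier [simp]: "submat M r0 c0 p q \<in> carrier_mat p q"
  unfolding submat_def by simp

lemma submat_dim [simp]: "dim_row (submat M r0 c0 p q) = p" "dim_col (submat M r0 c0 p q) = q"
  unfolding submat_def by simp_all

lemma submat_index [simp]:
  "i < p \<Longrightarrow> j < q \<Longrightarrow> submat M r0 c0 p q $$ (i,j) = M $$ (r0+i, c0+j)"
  unfolding submat_def by simp

lemma submat_mult_cols:
  assumes Q: "(Q::complex mat) \<in> carrier_mat m n" and R: "R \<in> carrier_mat n n" and l: "l \<le> n"
  shows "submat (Q * R) 0 0 m l = Q * submat R 0 0 n l"
proof (rule eq_matI)
  fix i j assume "i < dim_row (Q * submat R 0 0 n l)" "j < dim_col (Q * submat R 0 0 n l)"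
  then have i: "i < m" and j: "j < l" using Q by auto
  have "col (submat R 0 0 n l) j = col R j" using R j l by (intro eq_vecI) auto
  then show "submat (Q * R) 0 0 m l $$ (i, j) = (Q * submat R 0 0 n l) $$ (i, j)"
    using i j l Q R by simp
qed (use Q in auto)

lemma underdetermined_kernel:
  assumes T: "(T::complex mat) \<in> carrier_mat r c" and rc: "r < c"
  obtains w where "w \<in> carrier_vec c" "w \<noteq> 0\<^sub>v c" "T *\<^sub>v w = 0\<^sub>v r"
proof -
  (* pad T with zero rows to a singular square matrix *)
  define M where "M = mat c c (\<lambda>(a,t). if a < r then T $$ (a,t) else 0)"
  have M: "M \<in> carrier_mat c c" unfolding M_def by simp
  have "det M = (\<Sum>j<c. M $$ (c-1,j) * cofactor M (c-1) j)"
    by (rule laplace_expansion_row[OF M]) (use rc in auto)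
  also have "\<dots> = 0" using rc by (intro sum.neutral) (auto simp: M_def)
  finally obtain w where w: "w \<in> carrier_vec c" "w \<noteq> 0\<^sub>v c" and Mw: "M *\<^sub>v w = 0\<^sub>v c"
    using det_0_iff_vec_prod_zero[OF M] by auto
  have "T *\<^sub>v w = 0\<^sub>v r"
  proof (rule eq_vecI)
    fix a assume "a < dim_vec (0\<^sub>v r :: complex vec)"
    then have a: "a < r" by simp
    have "(T *\<^sub>v w) $ a = (M *\<^sub>v w) $ a"
      using a rc mult_mat_vec_index_sum[OF T w(1) a] mult_mat_vec_index_sum[OF M w(1), of a]
      by (simp add: M_def)
    then show "(T *\<^sub>v w) $ a = 0\<^sub>v r $ a" using Mw a rc by simp
  qed (use T in simp)
  with w show ?thesis by (rule that)
qed


lemma sq_norm_split: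
  assumes "w \<in> carrier_vec (l + k)"
  shows "sq_norm w = sq_norm (vec l (\<lambda>j. w$j)) + sq_norm (vec k (\<lambda>a. w$(l+a)))"
  using assms sum_lessThan_split[of l "l + k" "\<lambda>j. (cmod (w$j))^2"] by (simp add: sq_norm_def)

lemma mult_mat_vec_index_split:
  assumes R: "(R::complex mat) \<in> carrier_mat n n" and lk: "l + k = n"
    and w: "w \<in> carrier_vec n" and r: "r < n"
  shows "(R *\<^sub>v w) $ r = (\<Sum>t<l. R $$ (r,t) * w $ t) + (\<Sum>a<k. R $$ (r,l+a) * w $ (l+a))"
proof -
  have "n - l = k" using lk by simp
  then show ?thesis using mult_mat_vec_index_sum[OF R w r] sum_lessThan_split[of l n] lk by simp
qed

lemma upper_triangular_block_norms:
  fixes R :: "complex mat" and v :: "complex vec"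
  assumes R: "R \<in> carrier_mat n n" and ut: "upper_triangular R" and lk: "l + k = n"
    and v: "v \<in> carrier_vec n"
    and x_def: "x = vec k (\<lambda>a. v $ (l+a))"
    and z_def: "z = vec n (\<lambda>j. if j < l then 0 else v $ j)"
    and g_def: "g = vec l (\<lambda>r. (R *\<^sub>v v) $ r)" and f_def: "f = vec l (\<lambda>r. (R *\<^sub>v z) $ r)"
  shows "sq_norm v = sq_norm (vec l (\<lambda>j. v $ j)) + sq_norm x"
    and "sq_norm z = sq_norm x"
    and "sq_norm (R *\<^sub>v v) = sq_norm g + sq_norm (submat R l l k k *\<^sub>v x)"
    and "sq_norm (R *\<^sub>v z) = sq_norm f + sq_norm (submat R l l k k *\<^sub>v x)"
    and "sq_norm (submat R 0 0 n l *\<^sub>v vec l (\<lambda>j. v $ j)) = sq_norm (vec l (\<lambda>j. g$j - f$j))"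
proof -
  let ?R22 = "submat R l l k k" and ?C = "submat R 0 0 n l" and ?v1 = "vec l (\<lambda>j. v $ j)"
  have car: "v \<in> carrier_vec (l + k)" "z \<in> carrier_vec (l + k)"
    "R *\<^sub>v v \<in> carrier_vec (l + k)" "R *\<^sub>v z \<in> carrier_vec (l + k)"
    using R v lk by (auto simp: z_def)
  have car_C: "?C *\<^sub>v ?v1 \<in> carrier_vec (l + k)"
    using mult_mat_vec_carrier[OF submat_carrier[of R 0 0 n l] vec_carrier] lk by simp
  have x: "x \<in> carrier_vec k" unfolding x_def by simp
  have z: "z \<in> carrier_vec n" unfolding z_def by simp
  have lower0: "(\<Sum>t<l. R $$ (l+a,t) * w t) = 0" if "a < k" for a and w :: "nat \<Rightarrow> complex"
    using ut R that lk unfolding upper_triangular_def by (auto intro!: sum.neutral)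
  have R22x: "(?R22 *\<^sub>v x) $ a = (\<Sum>b<k. R $$ (l+a,l+b) * v $ (l+b))" if "a < k" for a
    using mult_mat_vec_index_sum[OF submat_carrier[of R l l k k] x that] that
    by (auto simp: x_def intro!: sum.cong)
  have bottom_v: "vec k (\<lambda>a. (R *\<^sub>v v) $ (l+a)) = ?R22 *\<^sub>v x"
    using mult_mat_vec_index_split[OF R lk v] lower0 R22x lk by (intro eq_vecI) auto
  have bottom_z: "vec k (\<lambda>a. (R *\<^sub>v z) $ (l+a)) = ?R22 *\<^sub>v x"
    using mult_mat_vec_index_split[OF R lk z] R22x lk by (intro eq_vecI) (auto simp: z_def)
  have Cv1: "(?C *\<^sub>v ?v1) $ r = (\<Sum>t<l. R $$ (r,t) * v $ t)" if "r < n" for r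
    using mult_mat_vec_index_sum[OF submat_carrier _ that, of ?v1] that by simp
  have top_C: "vec l (\<lambda>j. (?C *\<^sub>v ?v1) $ j) = vec l (\<lambda>j. g$j - f$j)"
    using Cv1 mult_mat_vec_index_split[OF R lk v] mult_mat_vec_index_split[OF R lk z] lk
    by (intro eq_vecI) (auto simp: g_def f_def z_def)
  have bottom_C: "vec k (\<lambda>a. (?C *\<^sub>v ?v1) $ (l+a)) = 0\<^sub>v k"
    using Cv1 lower0 lk by (intro eq_vecI) auto
  show "sq_norm v = sq_norm ?v1 + sq_norm x"
    using sq_norm_split[OF car(1)] by (simp add: x_def)
  have z_lo: "z $ j = 0" if "j < l" for j using that lk by (simp add: z_def)
  have z_hi: "z $ (l+a) = v $ (l+a)" if "a < k" for a using that lk by (simp add: z_def)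
  show "sq_norm z = sq_norm x"
    using sq_norm_split[OF car(2)] by (simp add: z_lo z_hi x_def sq_norm_def)
  show "sq_norm (R *\<^sub>v v) = sq_norm g + sq_norm (?R22 *\<^sub>v x)"
    using sq_norm_split[OF car(3)] bottom_v by (simp add: g_def)
  show "sq_norm (R *\<^sub>v z) = sq_norm f + sq_norm (?R22 *\<^sub>v x)"
    using sq_norm_split[OF car(4)] bottom_z by (simp add: f_def)
  show "sq_norm (?C *\<^sub>v ?v1) = sq_norm (vec l (\<lambda>j. g$j - f$j))"
    using sq_norm_split[OF car_C] top_C bottom_C by (simp add: sq_norm_def)
qed

lemma trailing_block_estimate:
  fixes R :: "complex mat" and v :: "complex vec"
  assumes R: "R \<in> carrier_mat n n" and ut: "upper_triangular R" and lk: "l + k = n" and l0: "0 < l"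
    and v: "v \<in> carrier_vec n" and Rv: "sq_norm (R *\<^sub>v v) \<le> s^2 * sq_norm v"
    and s0: "0 \<le> s" and gap: "s < sigma 1 (submat R 0 0 n l)"
  defines "x \<equiv> vec k (\<lambda>a. v $ (l+a))"
  shows "sq_norm (submat R l l k k *\<^sub>v x)
           \<le> ((sigma n R / sigma 1 (submat R 0 0 n l) + 1) * s)^2 * sq_norm x"
    and "sq_norm x = 0 \<Longrightarrow> sq_norm v = 0"
proof -
  define z where "z = vec n (\<lambda>j. if j < l then 0 else v $ j)"
  define g where "g = vec l (\<lambda>r. (R *\<^sub>v v) $ r)"
  define f where "f = vec l (\<lambda>r. (R *\<^sub>v z) $ r)"
  define v1 where "v1 = vec l (\<lambda>j. v $ j)"
  define s1 where "s1 = sigma 1 (submat R 0 0 n l)"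
  define sn where "sn = sigma n R"
  note norms = upper_triangular_block_norms[OF R ut lk v meta_eq_to_obj_eq[OF x_def] z_def g_def f_def,
      folded v1_def]
  have n0: "0 < n" using lk l0 by simp
  have sn0: "0 \<le> sn" unfolding sn_def using sigma_nonneg[OF R, of n] n0 by simp
  have s1p: "0 < s1" unfolding s1_def using s0 gap by linarith
  have Rz: "sq_norm (R *\<^sub>v z) \<le> sn^2 * sq_norm z"
    unfolding sn_def by (rule sigma_extreme_bounds(2)[OF R _ n0]) (simp add: z_def)
  have Cv1: "s1^2 * sq_norm v1 \<le> sq_norm (submat R 0 0 n l *\<^sub>v v1)"
    unfolding s1_def by (rule sigma_extreme_bounds(1)[OF submat_carrier _ l0]) (simp add: v1_def)
  have i: "(sqrt (sq_norm g))^2 + sq_norm (submat R l l k k *\<^sub>v x)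
      \<le> s^2 * ((sqrt (sq_norm v1))^2 + (sqrt (sq_norm x))^2)"
    using Rv norms(1,3) by simp
  have ii: "s1 * sqrt (sq_norm v1) \<le> sqrt (sq_norm g) + sqrt (sq_norm f)"
  proof -
    have "s1 * sqrt (sq_norm v1) = sqrt (s1^2 * sq_norm v1)" using s1p by (simp add: real_sqrt_mult)
    also have "\<dots> \<le> sqrt (sq_norm (vec l (\<lambda>j. g$j - f$j)))" using Cv1 norms(5) by simp
    also have "\<dots> \<le> sqrt (sq_norm g) + sqrt (sq_norm f)" by (rule norm_diff_le) (auto simp: g_def f_def)
    finally show ?thesis .
  qed
  have iii: "(sqrt (sq_norm f))^2 + sq_norm (submat R l l k k *\<^sub>v x) \<le> sn^2 * (sqrt (sq_norm x))^2"
    using Rz norms(2,4) by simp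
  show "sq_norm (submat R l l k k *\<^sub>v x) \<le> ((sigma n R / sigma 1 (submat R 0 0 n l) + 1) * s)^2 * sq_norm x"
    using gap_inequality[OF s0 gap[folded s1_def] sn0 _ i ii iii] unfolding sn_def s1_def by simp
  assume x0: "sq_norm x = 0"
  then have "sq_norm f + sq_norm (submat R l l k k *\<^sub>v x) \<le> 0" using Rz norms(2,4) by simp
  then have "sq_norm f = 0"
    using sq_norm_nonneg[of f] sq_norm_nonneg[of "submat R l l k k *\<^sub>v x"] by linarith
  then have "s1 * sqrt (sq_norm v1) \<le> sqrt (sq_norm g)" using ii by simp
  moreover have "(sqrt (sq_norm g))^2 \<le> s^2 * (sqrt (sq_norm v1))^2"
  proof -
    have "sq_norm (R *\<^sub>v v) \<le> s^2 * sq_norm v1" using Rv norms(1) x0 by simp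
    then have "sq_norm g \<le> s^2 * sq_norm v1"
      using norms(3) sq_norm_nonneg[of "submat R l l k k *\<^sub>v x"] by linarith
    then show ?thesis by simp
  qed
  ultimately have "sqrt (sq_norm v1) = 0"
    by (intro gap_injectivity[OF s0 gap[folded s1_def], of _ "sqrt (sq_norm g)"]) simp_all
  then show "sq_norm v = 0" using norms(1) x0 by simp
qed


(* Dimension count: as c ranges over C^i, the trailing parts of U (c, 0) range over the image
   of an i-dimensional space; requiring the first i - 1 coordinates in the basis U2 to vanish
   imposes only i - 1 linear conditions, so some nonzero c satisfies them. *)
lemma trailing_part_meets_subspace:
  fixes U U2 :: "complex mat"
  assumes U: "U \<in> carrier_mat n n" and U2: "U2 \<in> carrier_mat k k" and lk: "l + k = n"
    and i: "1 \<le> i" "i \<le> k"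
  obtains y where "y \<in> carrier_vec n" "y \<noteq> 0\<^sub>v n" "\<forall>j. i \<le> j \<longrightarrow> j < n \<longrightarrow> y$j = 0"
    "\<forall>j<i-1. (mat_adjoint U2 *\<^sub>v vec k (\<lambda>a. (U *\<^sub>v y) $ (l+a))) $ j = 0"
proof -
  define T where "T = mat_adjoint U2 * submat U l 0 k i"
  have T: "T \<in> carrier_mat k i"
    unfolding T_def by (rule mult_carrier_mat[OF adjoint_carrier[OF U2] submat_carrier])
  obtain c where c: "c \<in> carrier_vec i" "c \<noteq> 0\<^sub>v i" and Tc: "submat T 0 0 (i-1) i *\<^sub>v c = 0\<^sub>v (i-1)"
    using underdetermined_kernel[OF submat_carrier, of "i-1" i T] i by auto
  define y where "y = vec n (\<lambda>j. if j < i then c $ j else 0)"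
  define x where "x = vec k (\<lambda>a. (U *\<^sub>v y) $ (l+a))"
  have y: "y \<in> carrier_vec n" unfolding y_def by simp
  have y_lo: "y $ t = c $ t" if "t < i" for t using that i lk by (simp add: y_def)
  have y_hi: "y $ (i+j) = 0" if "j < n - i" for j using that by (simp add: y_def)
  have "y \<noteq> 0\<^sub>v n"
  proof
    assume "y = 0\<^sub>v n"
    then have "c $ j = 0" if "j < i" for j using y_lo[OF that] that i lk by simp
    then have "c = 0\<^sub>v i" using c(1) by (intro eq_vecI) auto
    with c show False by simp
  qed
  have x_c: "x = submat U l 0 k i *\<^sub>v c"
  proof (rule eq_vecI)
    fix a assume "a < dim_vec (submat U l 0 k i *\<^sub>v c)"
    then have a: "a < k" by simp
    have "(U *\<^sub>v y) $ (l+a) = (\<Sum>t<n. U $$ (l+a,t) * y $ t)"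
      using mult_mat_vec_index_sum[OF U y] a lk by simp
    also have "\<dots> = (\<Sum>t<i. U $$ (l+a,t) * y $ t) + (\<Sum>j<n-i. U $$ (l+a,i+j) * y $ (i+j))"
      using i lk by (intro sum_lessThan_split) simp
    also have "\<dots> = (\<Sum>t<i. U $$ (l+a,t) * c $ t)" by (simp add: y_lo y_hi)
    finally show "x $ a = (submat U l 0 k i *\<^sub>v c) $ a"
      using mult_mat_vec_index_sum[OF submat_carrier c(1) a] a by (simp add: x_def)
  qed (simp add: x_def)
  have coords: "mat_adjoint U2 *\<^sub>v x = T *\<^sub>v c"
    unfolding x_c T_def using U2 c by (simp add: assoc_mult_mat_vec[of _ k k _ i])
  have "(mat_adjoint U2 *\<^sub>v x) $ j = 0" if j: "j < i - 1" for j
  proof -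
    have "(mat_adjoint U2 *\<^sub>v x) $ j = (submat T 0 0 (i-1) i *\<^sub>v c) $ j"
      unfolding coords
      using mult_mat_vec_index_sum[OF submat_carrier c(1) j] mult_mat_vec_index_sum[OF T c(1), of j] j i
      by simp
    then show ?thesis unfolding Tc using j by simp
  qed
  moreover have "\<forall>j. i \<le> j \<longrightarrow> j < n \<longrightarrow> y$j = 0" by (simp add: y_def)
  ultimately show ?thesis using that y \<open>y \<noteq> 0\<^sub>v n\<close> unfolding x_def by blast
qed

(* On the i-dimensional space where |Rv| <= s|v|
   (s = sigma_i(R)) the block estimate applies; a nonzero v from it whose trailing part x lies
   in the space where |R22 x| >= sigma_i(R22) |x| compares the two bounds. *)
theorem upper_triangular_trailing_bound:
  fixes R :: "complex mat"
  assumes R: "R \<in> carrier_mat n n" and ut: "upper_triangular R" and kn: "k < n"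
    and i: "1 \<le> i" "i \<le> k"
    and gap: "sigma i R < sigma 1 (submat R 0 0 n (n - k))"
  shows "sigma i (submat R (n-k) (n-k) k k)
           \<le> (sigma n R / sigma 1 (submat R 0 0 n (n - k)) + 1) * sigma i R"
proof -
  define l where "l = n - k"
  have lk: "l + k = n" and l0: "0 < l" using kn by (auto simp: l_def)
  define R22 where "R22 = submat R l l k k"
  define s where "s = sigma i R"
  define tau where "tau = (sigma n R / sigma 1 (submat R 0 0 n l) + 1) * s"
  have s0: "0 \<le> s" unfolding s_def using sigma_nonneg[OF R] i kn by simp
  have gap': "s < sigma 1 (submat R 0 0 n l)" using gap unfolding s_def l_def .
  have tau0: "0 \<le> tau" unfolding tau_def using s0 gap' sigma_nonneg[OF R, of n] kn by simp
  have i_n: "i \<le> n" using i kn by simp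
  obtain U where U: "U \<in> carrier_mat n n" "mat_adjoint U * U = 1\<^sub>m n" "U * mat_adjoint U = 1\<^sub>m n"
    and small: "\<forall>y\<in>carrier_vec n. (\<forall>j. i \<le> j \<longrightarrow> j < n \<longrightarrow> y$j = 0) \<longrightarrow>
      sq_norm (R *\<^sub>v (U *\<^sub>v y)) \<le> (sigma i R)^2 * sq_norm y"
    by (rule sigma_upper_on_subspace[OF R i(1) i_n])
  obtain U2 where U2: "U2 \<in> carrier_mat k k" "mat_adjoint U2 * U2 = 1\<^sub>m k" "U2 * mat_adjoint U2 = 1\<^sub>m k"
    and large: "\<forall>y\<in>carrier_vec k. (\<forall>j<i-1. y$j = 0) \<longrightarrow>
      (sigma i R22)^2 * sq_norm y \<le> sq_norm (R22 *\<^sub>v (U2 *\<^sub>v y))"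
    unfolding R22_def by (rule sigma_lower_on_subspace[OF submat_carrier i])
  obtain y where y: "y \<in> carrier_vec n" "y \<noteq> 0\<^sub>v n" and y_small: "\<forall>j. i \<le> j \<longrightarrow> j < n \<longrightarrow> y$j = 0"
    and y_large: "\<forall>j<i-1. (mat_adjoint U2 *\<^sub>v vec k (\<lambda>a. (U *\<^sub>v y) $ (l+a))) $ j = 0"
    by (rule trailing_part_meets_subspace[OF U(1) U2(1) lk i])
  define v where "v = U *\<^sub>v y"
  define x where "x = vec k (\<lambda>a. v $ (l+a))"
  define y' where "y' = mat_adjoint U2 *\<^sub>v x"
  have v: "v \<in> carrier_vec n" unfolding v_def using U y by simp
  have x: "x \<in> carrier_vec k" unfolding x_def by simp
  have y': "y' \<in> carrier_vec k"
    unfolding y'_def by (rule mult_mat_vec_carrier[OF adjoint_carrier[OF U2(1)] x])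
  have x_U2: "x = U2 *\<^sub>v y'" and y'_norm: "sq_norm y' = sq_norm x"
    unfolding y'_def using unitary_coordinates[OF U2(1,3) x] by simp_all
  have v_norm: "sq_norm v = sq_norm y" unfolding v_def by (rule sq_norm_isometry[OF U(1,2) y(1)])
  then have "sq_norm (R *\<^sub>v v) \<le> s^2 * sq_norm v"
    using small y y_small unfolding v_def s_def by simp
  note est = trailing_block_estimate[OF R ut lk l0 v this s0 gap', folded x_def R22_def tau_def]
  have x0: "sq_norm x \<noteq> 0"
    using est(2) v_norm sq_norm_eq_0_iff[OF y(1)] y(2) by auto
  have "(sigma i R22)^2 * sq_norm x = (sigma i R22)^2 * sq_norm y'" using y'_norm by simp
  also have "\<dots> \<le> sq_norm (R22 *\<^sub>v (U2 *\<^sub>v y'))"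
    using large y' y_large unfolding y'_def x_def v_def by blast
  also have "\<dots> \<le> tau^2 * sq_norm x" using est(1) by (simp add: x_U2[symmetric])
  finally have "(sigma i R22)^2 \<le> tau^2"
    using x0 sq_norm_nonneg[of x] by (simp add: mult_le_cancel_right)
  then show ?thesis using tau0 unfolding R22_def tau_def s_def l_def by (rule power2_le_imp_le)
qed

theorem lemma3:
  fixes A Q R :: "complex mat" and m n k :: nat
  assumes A: "A \<in> carrier_mat m n" and mn: "n \<le> m"
    and Q: "Q \<in> carrier_mat m n" and Qorth: "mat_adjoint Q * Q = 1\<^sub>m n"
    and R: "R \<in> carrier_mat n n" and Rut: "upper_triangular R"
    and QR: "A = Q * R"
    and kn: "k < n"
    and gap: "\<forall>i\<in>{1..k}. sigma i A < sigma 1 (submat A 0 0 m (n - k))"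
  shows "\<forall>i\<in>{1..k}. sigma i (submat R (n - k) (n - k) k k)
           \<le> (sigma n A / sigma 1 (submat A 0 0 m (n - k)) + 1) * sigma i A"
proof
  fix i assume i: "i \<in> {1..k}"
  have sA: "sigma j A = sigma j R" for j
    unfolding QR by (rule sigma_isometry_mult[OF Q Qorth R])
  have sA1: "sigma 1 (submat A 0 0 m (n - k)) = sigma 1 (submat R 0 0 n (n - k))"
    unfolding QR submat_mult_cols[OF Q R diff_le_self]
    by (rule sigma_isometry_mult[OF Q Qorth submat_carrier])
  show "sigma i (submat R (n - k) (n - k) k k)
           \<le> (sigma n A / sigma 1 (submat A 0 0 m (n - k)) + 1) * sigma i A"
    using upper_triangular_trailing_bound[OF R Rut kn] gap i unfolding sA sA1 by simp
qed

end
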